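(* Let $G$ be a finite simple graph having a Hamiltonian path $P=x_1x_2\dots x_n$ such that $G$ has no two secant edges with respect to $P$. Then $\chi(G)\le 3$.
   Context: Edges of $G$ are secant with respect to $P$ if they are secant with respect to the enumeration $x_1x_2\dots x_n$ induced by $P$: an edge $x_ix_j$ is a jump if $|i-j|>1$, and two jumps $x_lx_m$, $x_px_q$ with $l<m$, $p<q$ are secant if $l<p<m<q$ or $p<l<q<m$. *)

theory Defs
  imports Main
begin

definition simple_graph :: "'a set \<Rightarrow> ('a \<Rightarrow> 'a \<Rightarrow> bool) \<Rightarrow> bool" where
  "simple_graph V E \<longleftrightarrow> finite V \<and> (\<forall>x y. E x y \<longrightarrow> x \<in> V \<and> y \<in> V)
     \<and> (\<forall>x y. E x y \<longrightarrow> E y x) \<and> (\<forall>x. \<not> E x x)"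

text \<open>Hamiltonian path P = x_1 ... x_n given as a list (0-indexed).\<close>
definition hamiltonian_path :: "'a set \<Rightarrow> ('a \<Rightarrow> 'a \<Rightarrow> bool) \<Rightarrow> 'a list \<Rightarrow> bool" where
  "hamiltonian_path V E P \<longleftrightarrow> distinct P \<and> set P = V
     \<and> (\<forall>i. Suc i < length P \<longrightarrow> E (P ! i) (P ! Suc i))"

definition jump :: "('a \<Rightarrow> 'a \<Rightarrow> bool) \<Rightarrow> 'a list \<Rightarrow> nat \<Rightarrow> nat \<Rightarrow> bool" where
  "jump E P l m \<longleftrightarrow> l < m \<and> m < length P \<and> E (P ! l) (P ! m) \<and> m - l > 1"

definition secant :: "('a \<Rightarrow> 'a \<Rightarrow> bool) \<Rightarrow> 'a list \<Rightarrow> nat \<Rightarrow> nat \<Rightarrow> nat \<Rightarrow> nat \<Rightarrow> bool" where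
  "secant E P l m p q \<longleftrightarrow> jump E P l m \<and> jump E P p q \<and>
     ((l < p \<and> p < m \<and> m < q) \<or> (p < l \<and> l < q \<and> q < m))"

definition no_secant_edges :: "('a \<Rightarrow> 'a \<Rightarrow> bool) \<Rightarrow> 'a list \<Rightarrow> bool" where
  "no_secant_edges E P \<longleftrightarrow> (\<forall>l m p q. \<not> secant E P l m p q)"

definition proper_colouring :: "'a set \<Rightarrow> ('a \<Rightarrow> 'a \<Rightarrow> bool) \<Rightarrow> nat \<Rightarrow> ('a \<Rightarrow> nat) \<Rightarrow> bool" where
  "proper_colouring V E k c \<longleftrightarrow> (\<forall>x\<in>V. c x < k) \<and> (\<forall>x y. E x y \<longrightarrow> c x \<noteq> c y)"

definition chromatic_number :: "'a set \<Rightarrow> ('a \<Rightarrow> 'a \<Rightarrow> bool) \<Rightarrow> nat" where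
  "chromatic_number V E = (LEAST k. \<exists>c. proper_colouring V E k c)"

end

theory Submission
  imports Defs
begin

text \<open>
  Place the vertices on a line in the order of P and draw every edge as an arc above it; having no
  secant edges means that no two arcs cross. In such a graph every nonempty vertex set S contains a
  vertex of degree at most 2 in S: take a shortest arc (u, v) with a vertex of S strictly below it,
  where the pair of extreme vertices of S also counts as an arc, and let s be the first vertex of S
  after u. Since arcs do not cross, all neighbours of s lie in [u, v]; below s only u is possible,
  and two neighbours above s would produce a shorter arc from s. Hence the graph is 2-degenerate,
  and colouring greedily in a degeneracy order uses 3 colours.
\<close>

definition noncrossing :: "(nat \<Rightarrow> nat \<Rightarrow> bool) \<Rightarrow> bool" where
  "noncrossing R \<longleftrightarrow> (\<forall>l p m q. l < p \<and> p < m \<and> m < q \<longrightarrow> \<not> (R l m \<and> R p q))"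

definition position_graph :: "('a \<Rightarrow> 'a \<Rightarrow> bool) \<Rightarrow> 'a list \<Rightarrow> nat \<Rightarrow> nat \<Rightarrow> bool" where
  "position_graph E P i j \<longleftrightarrow> i < length P \<and> j < length P \<and> E (P ! i) (P ! j)"

text \<open>Edges between consecutive positions cannot cross anything, so excluding secant jumps
  excludes all crossings.\<close>

lemma no_secant_edges_noncrossing:
  assumes "no_secant_edges E P"
  shows "noncrossing (position_graph E P)"
  unfolding noncrossing_def
proof (intro allI impI notI)
  fix l p m q
  assume "l < p \<and> p < m \<and> m < q" and "position_graph E P l m \<and> position_graph E P p q"
  then have "secant E P l m p q"
    unfolding secant_def jump_def position_graph_def by auto
  with assms show False
    unfolding no_secant_edges_def by blast
qed

text \<open>The second alternative makes the pair of positions enclosing S behave like an edge that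
  no edge crosses.\<close>

definition arc :: "nat set \<Rightarrow> (nat \<Rightarrow> nat \<Rightarrow> bool) \<Rightarrow> nat \<Rightarrow> nat \<Rightarrow> bool" where
  "arc S R u v \<longleftrightarrow> u < v \<and> (R u v \<or> S \<subseteq> {u..v})"

lemma arc_neighbours_within:
  assumes "noncrossing R" and "\<And>x y. R x y \<Longrightarrow> R y x"
    and "arc S R u v" "u < s" "s < v" "y \<in> S" "R s y"
  shows "y \<in> {u..v}"
  using assms unfolding arc_def noncrossing_def by (meson atLeastAtMost_iff not_le subsetD)

lemma shortest_arc_low_degree:
  assumes noncrossing: "noncrossing R"
    and sym: "\<And>x y. R x y \<Longrightarrow> R y x" and irrefl: "\<And>x. \<not> R x x"
    and "arc S R u v" and s: "s \<in> S" "u < s" "s < v"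
    and first: "\<And>x. x \<in> S \<Longrightarrow> u < x \<Longrightarrow> x < v \<Longrightarrow> s \<le> x"
    and shortest: "\<And>u' v' x. arc S R u' v' \<Longrightarrow> x \<in> S \<Longrightarrow> u' < x \<Longrightarrow> x < v' \<Longrightarrow> v - u \<le> v' - u'"
  shows "card {y\<in>S. R s y} \<le> 2"
proof -
  have within: "y \<in> {u..v}" if "y \<in> S" "R s y" for y
    using arc_neighbours_within[of R S u v s y] noncrossing sym \<open>arc S R u v\<close> s that by blast
  have below: "y = u" if "y \<in> S" "R s y" "y < s" for y
    using within[OF that(1,2)] first[OF that(1)] that(3) \<open>s < v\<close> by fastforce
  have above: "y = w" if neighbours: "y \<in> S" "w \<in> S" "R s y" "R s w" "s < y" "s < w" for y w
  proof (rule ccontr)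
    assume "y \<noteq> w"
    then obtain y' w' where "y' \<in> S" "w' \<in> S" "R s w'" "s < y'" "y' < w'"
      using neighbours by (meson linorder_neqE_nat)
    then have "arc S R s w'" and "w' \<le> v"
      using within unfolding arc_def by auto
    then show False
      using shortest[of s w' y'] \<open>y' \<in> S\<close> \<open>u < s\<close> \<open>s < y'\<close> \<open>y' < w'\<close> by linarith
  qed
  obtain w where w: "\<And>y. y \<in> S \<Longrightarrow> R s y \<Longrightarrow> s < y \<Longrightarrow> y = w"
    using above by blast
  have "{y\<in>S. R s y} \<subseteq> {u, w}"
    using below w irrefl by (fastforce simp: neq_iff)
  then have "card {y\<in>S. R s y} \<le> card {u, w}"
    by (intro card_mono) auto
  also have "\<dots> \<le> 2"
    by (cases "u = w") auto
  finally show ?thesis .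
qed

lemma noncrossing_low_degree:
  fixes R :: "nat \<Rightarrow> nat \<Rightarrow> bool"
  assumes "noncrossing R"
    and "\<And>x y. R x y \<Longrightarrow> R y x" and "\<And>x. \<not> R x x"
    and "finite S" "S \<noteq> {}"
  shows "\<exists>x\<in>S. card {y\<in>S. R x y} \<le> 2"
proof (cases "card S \<le> 2")
  case True
  obtain x where "x \<in> S"
    using \<open>S \<noteq> {}\<close> by blast
  moreover have "card {y\<in>S. R x y} \<le> card S"
    using \<open>finite S\<close> by (intro card_mono) auto
  ultimately show ?thesis
    using True by force
next
  case False
  have "\<not> S \<subseteq> {Min S, Max S}"
  proof
    assume "S \<subseteq> {Min S, Max S}"
    then have "card S \<le> card {Min S, Max S}"
      by (intro card_mono) auto
    also have "\<dots> \<le> 2"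
      by (cases "Min S = Max S") auto
    finally show False
      using False by simp
  qed
  then obtain x where x: "x \<in> S" "x \<noteq> Min S" "x \<noteq> Max S"
    by blast
  then have "Min S < x" "x < Max S"
    using Min_le[OF \<open>finite S\<close> x(1)] Max_ge[OF \<open>finite S\<close> x(1)] by auto
  define spanning where "spanning u v \<longleftrightarrow> arc S R u v \<and> (\<exists>x\<in>S. u < x \<and> x < v)" for u v
  have "spanning (Min S) (Max S)"
    using x(1) \<open>Min S < x\<close> \<open>x < Max S\<close> \<open>finite S\<close>
    unfolding spanning_def arc_def by auto
  then obtain u v where "spanning u v" and shortest: "\<And>u' v'. spanning u' v' \<Longrightarrow> v - u \<le> v' - u'"
    using ex_has_least_nat[of "\<lambda>(u, v). spanning u v" "(Min S, Max S)" "\<lambda>(u, v). v - u"] by auto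
  define s where "s = Min {x\<in>S. u < x \<and> x < v}"
  have "finite {x\<in>S. u < x \<and> x < v}" "{x\<in>S. u < x \<and> x < v} \<noteq> {}"
    using \<open>spanning u v\<close> \<open>finite S\<close> unfolding spanning_def by auto
  then have "s \<in> S" "u < s" "s < v" "\<And>x. x \<in> S \<Longrightarrow> u < x \<Longrightarrow> x < v \<Longrightarrow> s \<le> x"
    unfolding s_def using Min_in[of "{x\<in>S. u < x \<and> x < v}"] by auto
  then have "card {y\<in>S. R s y} \<le> 2"
    using assms \<open>spanning u v\<close> shortest unfolding spanning_def
    by (intro shortest_arc_low_degree[of R S u v s]) blast+
  with \<open>s \<in> S\<close> show ?thesis
    by blast
qed

lemma degenerate_colouring:
  fixes R :: "'a \<Rightarrow> 'a \<Rightarrow> bool"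
  assumes "finite S"
    and sym: "\<And>x y. R x y \<Longrightarrow> R y x" and irrefl: "\<And>x. \<not> R x x"
    and "\<And>T. T \<subseteq> S \<Longrightarrow> T \<noteq> {} \<Longrightarrow> \<exists>x\<in>T. card {y\<in>T. R x y} < k"
  shows "\<exists>c. (\<forall>x\<in>S. c x < k) \<and> (\<forall>x\<in>S. \<forall>y\<in>S. R x y \<longrightarrow> c x \<noteq> c y)"
  using assms(1,4)
proof (induction S rule: finite_psubset_induct)
  case (psubset S)
  show ?case
  proof (cases "S = {}")
    case False
    then obtain v where v: "v \<in> S" and low: "card {y\<in>S. R v y} < k"
      using psubset.prems by blast
    obtain c where c: "\<forall>x\<in>S - {v}. c x < k" "\<forall>x\<in>S - {v}. \<forall>y\<in>S - {v}. R x y \<longrightarrow> c x \<noteq> c y"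
      using psubset.IH[of "S - {v}"] psubset.prems v by blast
    define used where "used = c ` {y\<in>S. R v y}"
    have "card used < k"
      using card_image_le[of "{y\<in>S. R v y}" c] low psubset.hyps unfolding used_def by simp
    then have "\<not> {..<k} \<subseteq> used"
      using card_mono[of used "{..<k}"] psubset.hyps unfolding used_def by fastforce
    then obtain j where "j < k" "j \<notin> used"
      by auto
    have neighbour_colour: "j \<noteq> c y" if "y \<in> S" "R v y" for y
      using \<open>j \<notin> used\<close> that unfolding used_def by blast
    have "(c(v := j)) x \<noteq> (c(v := j)) y" if "x \<in> S" "y \<in> S" "R x y" for x y
      using that c neighbour_colour sym irrefl by (cases "x = v"; cases "y = v") fastforce+
    moreover have "\<forall>x\<in>S. (c(v := j)) x < k"
      using c \<open>j < k\<close> by simp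
    ultimately show ?thesis
      by (intro exI[of _ "c(v := j)"]) blast
  qed simp
qed

lemma proper_colouring_inv_into:
  assumes "f ` I = V" and "\<And>x y. E x y \<Longrightarrow> x \<in> V \<and> y \<in> V"
    and "\<forall>i\<in>I. c i < k" and "\<forall>i\<in>I. \<forall>j\<in>I. E (f i) (f j) \<longrightarrow> c i \<noteq> c j"
  shows "proper_colouring V E k (c \<circ> inv_into I f)"
  unfolding proper_colouring_def
proof (intro conjI ballI allI impI)
  fix x
  assume "x \<in> V"
  then show "(c \<circ> inv_into I f) x < k"
    using assms(1,3) inv_into_into[of x f I] by simp
next
  fix x y
  assume "E x y"
  moreover have "x \<in> f ` I" "y \<in> f ` I"
    using assms(1,2) \<open>E x y\<close> by auto
  ultimately have "E (f (inv_into I f x)) (f (inv_into I f y))"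
    by (simp add: f_inv_into_f)
  then show "(c \<circ> inv_into I f) x \<noteq> (c \<circ> inv_into I f) y"
    using assms(4) inv_into_into[OF \<open>x \<in> f ` I\<close>] inv_into_into[OF \<open>y \<in> f ` I\<close>] by simp
qed

lemma chromatic_number_le:
  assumes "proper_colouring V E k c"
  shows "chromatic_number V E \<le> k"
  unfolding chromatic_number_def using assms by (intro Least_le) blast

theorem proposition3:
  fixes V :: "'a set" and E :: "'a \<Rightarrow> 'a \<Rightarrow> bool" and P :: "'a list"
  assumes "simple_graph V E"
    and "hamiltonian_path V E P"
    and "no_secant_edges E P"
  shows "chromatic_number V E \<le> 3"
proof -
  let ?R = "position_graph E P"
  have edges: "\<And>x y. E x y \<Longrightarrow> x \<in> V \<and> y \<in> V" and symmetric: "\<And>x y. ?R x y \<Longrightarrow> ?R y x"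
    and irreflexive: "\<And>x. \<not> ?R x x"
    using assms(1) unfolding simple_graph_def position_graph_def by auto
  have low_degree: "\<exists>x\<in>T. card {y\<in>T. ?R x y} < 3" if T: "T \<subseteq> {..<length P}" "T \<noteq> {}" for T
  proof -
    have "finite T"
      using T(1) finite_subset by blast
    then obtain x where "x \<in> T" "card {y\<in>T. ?R x y} \<le> 2"
      using noncrossing_low_degree[OF no_secant_edges_noncrossing[OF assms(3)] symmetric irreflexive
          \<open>finite T\<close> T(2)]
      by blast
    then show ?thesis
      by (intro bexI[of _ x]) linarith+
  qed
  obtain c :: "nat \<Rightarrow> nat" where c: "\<forall>i\<in>{..<length P}. c i < 3"
      "\<forall>i\<in>{..<length P}. \<forall>j\<in>{..<length P}. ?R i j \<longrightarrow> c i \<noteq> c j"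
    using degenerate_colouring[OF finite_lessThan symmetric irreflexive low_degree] by blast
  have "(!) P ` {..<length P} = V"
    using assms(2) unfolding hamiltonian_path_def by (simp add: lessThan_atLeast0 nth_image)
  then have "proper_colouring V E 3 (c \<circ> inv_into {..<length P} ((!) P))"
    using c edges unfolding position_graph_def by (intro proper_colouring_inv_into) simp_all
  then show ?thesis
    by (rule chromatic_number_le)
qed

end
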